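(* Let $\Gamma$ be a group and let $\mathcal{S}$ be a Gr-category of the type $(\Pi,A)$. Then every factor set $(\theta,F)$ on $\Gamma$ with coefficients in $\mathcal{S}$ is cohomologous to an enough strict factor set $(\mu,G)$ on $\Gamma$ with coefficients in $\mathcal{S}$.
   Context: Let $\Pi$ be a group and $A$ a left $\Pi$-module. A Gr-category of the type $(\Pi,A)$, $\mathcal{S}(\Pi,A,\xi)$, has as objects the elements of $\Pi$, only automorphisms as morphisms, $\mathrm{Aut}(x)=\{x\}\times A$, composition $(x,u)\circ(x,v)=(x,u+v)$, tensor $x\otimes y=xy$, $(x,u)\otimes(y,v)=(xy,u+xv)$, associativity constraint $a_{x,y,z}=(xyz,\xi(x,y,z))$ for a normalized 3-cocycle $\xi\in Z^3(\Pi,A)$, and strict unit constraints (unit object $I=1$). A monoidal functor is $F=(F,\widetilde F,\widehat F)$ with $\widetilde F_{x,y}:F(x\otimes y)\to F(x)\otimes F(y)$ and $\widehat F:F(I)\to I$. A factor set on $\Gamma$ with coefficients in $\mathcal{S}$ is a pair $(\theta,F)$: monoidal autoequivalences $F^\sigma:\mathcal{S}\to\mathcal{S}$ ($\sigma\in\Gamma$) and isomorphisms of monoidal functors $\theta^{\sigma,\tau}:F^\sigma F^\tau\to F^{\sigma\tau}$, such that $F^1=\mathrm{id}$, $\theta^{1,\sigma}=\mathrm{id}_{F^\sigma}=\theta^{\sigma,1}$, and $\theta^{\sigma\tau,\gamma}\circ(\theta^{\sigma,\tau}F^\gamma)=\theta^{\sigma,\tau\gamma}\circ(F^\sigma\theta^{\tau,\gamma})$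 for all $\sigma,\tau,\gamma$. A factor set $(\theta,F)$ is enough strict if $\widehat{F^\sigma}=\mathrm{id}_I$ for all $\sigma\in\Gamma$. Two factor sets $(\theta,F)$, $(\mu,G)$ are cohomologous if there is a family of isomorphisms of monoidal functors $u^\sigma:F^\sigma\to G^\sigma$ ($\sigma\in\Gamma$) with $u^1=\mathrm{id}$ and $u^{\sigma\tau}\circ\theta^{\sigma,\tau}=\mu^{\sigma,\tau}\circ(u^\sigma G^\tau)\circ(F^\sigma u^\tau)$ for all $\sigma,\tau\in\Gamma$. *)

theory Defs
  imports "HOL-Algebra.Group"
begin

text \<open>
  Concrete encoding of the Gr-category S(Pi, A, xi).
  Pi is a (multiplicative) group given as a HOL-Algebra structure P; A is an
  abelian group given as a type 'a of class ab_group_add; the left Pi-module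
  structure is act :: 'p => 'a => 'a.  Objects of S are the elements of
  carrier P; the only morphisms are automorphisms (x,u), u in A, so a morphism
  is recorded by its underlying element u of A (its object being clear).
  Composition is addition, (x,u) tensor (y,v) = (xy, u + act x v),
  a_{x,y,z} = (xyz, xi x y z), strict unit constraints.
\<close>

definition left_module :: "'p monoid \<Rightarrow> ('p \<Rightarrow> 'a::ab_group_add \<Rightarrow> 'a) \<Rightarrow> bool" where
  "left_module P act \<longleftrightarrow> group P
     \<and> (\<forall>x\<in>carrier P. \<forall>u v. act x (u + v) = act x u + act x v)
     \<and> (\<forall>u. act \<one>\<^bsub>P\<^esub> u = u)
     \<and> (\<forall>x\<in>carrier P. \<forall>y\<in>carrier P. \<forall>u. act (x \<otimes>\<^bsub>P\<^esub> y) u = act x (act y u))"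

definition normalized_3cocycle ::
  "'p monoid \<Rightarrow> ('p \<Rightarrow> 'a::ab_group_add \<Rightarrow> 'a) \<Rightarrow> ('p \<Rightarrow> 'p \<Rightarrow> 'p \<Rightarrow> 'a) \<Rightarrow> bool" where
  "normalized_3cocycle P act \<xi> \<longleftrightarrow>
     (\<forall>x\<in>carrier P. \<forall>y\<in>carrier P. \<forall>z\<in>carrier P. \<forall>t\<in>carrier P.
        act x (\<xi> y z t) - \<xi> (x \<otimes>\<^bsub>P\<^esub> y) z t + \<xi> x (y \<otimes>\<^bsub>P\<^esub> z) t
        - \<xi> x y (z \<otimes>\<^bsub>P\<^esub> t) + \<xi> x y z = 0)
   \<and> (\<forall>x\<in>carrier P. \<forall>y\<in>carrier P.
        \<xi> \<one>\<^bsub>P\<^esub> x y = 0 \<and> \<xi> x \<one>\<^bsub>P\<^esub> y = 0 \<and> \<xi> x y \<one>\<^bsub>P\<^esub> = 0)"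

text \<open>
  Data of a (monoidal) functor S -> S:
  mf_obj x = F(x);  mf_mor x u = the A-component of F(x,u) : F x -> F x;
  mf_tld x y = A-component of F~_{x,y} : F(xy) -> F(x)F(y)  (forces F(xy) = F(x)F(y));
  mf_hat = A-component of F^ : F(1) -> 1  (forces F(1) = 1).
\<close>

record ('p, 'a) mfun =
  mf_obj :: "'p \<Rightarrow> 'p"
  mf_mor :: "'p \<Rightarrow> 'a \<Rightarrow> 'a"
  mf_tld :: "'p \<Rightarrow> 'p \<Rightarrow> 'a"
  mf_hat :: "'a"

definition monoidal_functor ::
  "'p monoid \<Rightarrow> ('p \<Rightarrow> 'a::ab_group_add \<Rightarrow> 'a) \<Rightarrow> ('p \<Rightarrow> 'p \<Rightarrow> 'p \<Rightarrow> 'a) \<Rightarrow> ('p, 'a) mfun \<Rightarrow> bool" where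
  "monoidal_functor P act \<xi> F \<longleftrightarrow>
     \<comment> \<open>F is a functor S -> S\<close>
     (\<forall>x\<in>carrier P. mf_obj F x \<in> carrier P)
   \<and> (\<forall>x\<in>carrier P. \<forall>u v. mf_mor F x (u + v) = mf_mor F x u + mf_mor F x v)
     \<comment> \<open>F~_{x,y} : F(xy) -> F(x)F(y) and F^ : F(I) -> I are morphisms of S\<close>
   \<and> (\<forall>x\<in>carrier P. \<forall>y\<in>carrier P. mf_obj F (x \<otimes>\<^bsub>P\<^esub> y) = mf_obj F x \<otimes>\<^bsub>P\<^esub> mf_obj F y)
   \<and> mf_obj F \<one>\<^bsub>P\<^esub> = \<one>\<^bsub>P\<^esub>
     \<comment> \<open>naturality of F~ :  F~ o F((x,u) tensor (y,v)) = (F(x,u) tensor F(y,v)) o F~\<close>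
   \<and> (\<forall>x\<in>carrier P. \<forall>y\<in>carrier P. \<forall>u v.
        mf_tld F x y + mf_mor F (x \<otimes>\<^bsub>P\<^esub> y) (u + act x v)
        = (mf_mor F x u + act (mf_obj F x) (mf_mor F y v)) + mf_tld F x y)
     \<comment> \<open>compatibility with the associativity constraints\<close>
   \<and> (\<forall>x\<in>carrier P. \<forall>y\<in>carrier P. \<forall>z\<in>carrier P.
        \<xi> (mf_obj F x) (mf_obj F y) (mf_obj F z)
          + act (mf_obj F x) (mf_tld F y z) + mf_tld F x (y \<otimes>\<^bsub>P\<^esub> z)
        = mf_tld F x y + mf_tld F (x \<otimes>\<^bsub>P\<^esub> y) z
          + mf_mor F (x \<otimes>\<^bsub>P\<^esub> y \<otimes>\<^bsub>P\<^esub> z) (\<xi> x y z))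
     \<comment> \<open>compatibility with the (strict) unit constraints:
         F(l_x) = l_{Fx} o (F^ tensor id) o F~_{1,x},  F(r_x) = r_{Fx} o (id tensor F^) o F~_{x,1}\<close>
   \<and> (\<forall>x\<in>carrier P. mf_hat F + mf_tld F \<one>\<^bsub>P\<^esub> x = 0)
   \<and> (\<forall>x\<in>carrier P. act (mf_obj F x) (mf_hat F) + mf_tld F x \<one>\<^bsub>P\<^esub> = 0)"

text \<open>A monoidal autoequivalence: a monoidal functor that is an equivalence, i.e.
  fully faithful and essentially surjective.  Since S is skeletal with only
  automorphisms, this means: bijective on objects and bijective on each Aut(x).\<close>

definition monoidal_autoequiv ::
  "'p monoid \<Rightarrow> ('p \<Rightarrow> 'a::ab_group_add \<Rightarrow> 'a) \<Rightarrow> ('p \<Rightarrow> 'p \<Rightarrow> 'p \<Rightarrow> 'a) \<Rightarrow> ('p, 'a) mfun \<Rightarrow> bool" where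
  "monoidal_autoequiv P act \<xi> F \<longleftrightarrow>
     monoidal_functor P act \<xi> F
   \<and> bij_betw (mf_obj F) (carrier P) (carrier P)
   \<and> (\<forall>x\<in>carrier P. bij (mf_mor F x))"

text \<open>Morphism (= isomorphism, all morphisms of S being invertible) of monoidal
  functors F -> G with components t x : F x -> G x.\<close>

definition mnat ::
  "'p monoid \<Rightarrow> ('p \<Rightarrow> 'a::ab_group_add \<Rightarrow> 'a) \<Rightarrow> ('p, 'a) mfun \<Rightarrow> ('p, 'a) mfun \<Rightarrow> ('p \<Rightarrow> 'a) \<Rightarrow> bool" where
  "mnat P act F G t \<longleftrightarrow>
     (\<forall>x\<in>carrier P. mf_obj F x = mf_obj G x)
   \<and> (\<forall>x\<in>carrier P. \<forall>u. t x + mf_mor F x u = mf_mor G x u + t x)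
   \<and> (\<forall>x\<in>carrier P. \<forall>y\<in>carrier P.
        mf_tld G x y + t (x \<otimes>\<^bsub>P\<^esub> y) = (t x + act (mf_obj F x) (t y)) + mf_tld F x y)
   \<and> mf_hat G + t \<one>\<^bsub>P\<^esub> = mf_hat F"

text \<open>Composition F G of monoidal functors (apply G first):
  (FG)~_{x,y} = F~_{Gx,Gy} o F(G~_{x,y}),  (FG)^ = F^ o F(G^).\<close>

definition mf_comp :: "'p monoid \<Rightarrow> ('p, 'a::ab_group_add) mfun \<Rightarrow> ('p, 'a) mfun \<Rightarrow> ('p, 'a) mfun" where
  "mf_comp P F G =
     \<lparr> mf_obj = (\<lambda>x. mf_obj F (mf_obj G x)),
       mf_mor = (\<lambda>x u. mf_mor F (mf_obj G x) (mf_mor G x u)),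
       mf_tld = (\<lambda>x y. mf_tld F (mf_obj G x) (mf_obj G y)
                        + mf_mor F (mf_obj G (x \<otimes>\<^bsub>P\<^esub> y)) (mf_tld G x y)),
       mf_hat = mf_hat F + mf_mor F (mf_obj G \<one>\<^bsub>P\<^esub>) (mf_hat G) \<rparr>"

definition mf_id :: "('p, 'a::ab_group_add) mfun" where
  "mf_id = \<lparr> mf_obj = (\<lambda>x. x), mf_mor = (\<lambda>x u. u), mf_tld = (\<lambda>x y. 0), mf_hat = 0 \<rparr>"

definition mf_eq_on :: "'p monoid \<Rightarrow> ('p, 'a) mfun \<Rightarrow> ('p, 'a) mfun \<Rightarrow> bool" where
  "mf_eq_on P F G \<longleftrightarrow>
     (\<forall>x\<in>carrier P. mf_obj F x = mf_obj G x)
   \<and> (\<forall>x\<in>carrier P. \<forall>u. mf_mor F x u = mf_mor G x u)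
   \<and> (\<forall>x\<in>carrier P. \<forall>y\<in>carrier P. mf_tld F x y = mf_tld G x y)
   \<and> mf_hat F = mf_hat G"

text \<open>Vertical composition t o s, right whiskering t K (components t_{K x}),
  left whiskering F t for t : G -> H (components F(t_x), t_x an automorphism of G x).\<close>

definition vcomp :: "('p \<Rightarrow> 'a::ab_group_add) \<Rightarrow> ('p \<Rightarrow> 'a) \<Rightarrow> 'p \<Rightarrow> 'a" where
  "vcomp t s = (\<lambda>x. t x + s x)"

definition whisk_r :: "('p \<Rightarrow> 'a) \<Rightarrow> ('p, 'a) mfun \<Rightarrow> 'p \<Rightarrow> 'a" where
  "whisk_r t K = (\<lambda>x. t (mf_obj K x))"

definition whisk_l :: "('p, 'a) mfun \<Rightarrow> ('p, 'a) mfun \<Rightarrow> ('p \<Rightarrow> 'a) \<Rightarrow> 'p \<Rightarrow> 'a" where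
  "whisk_l F G t = (\<lambda>x. mf_mor F (mf_obj G x) (t x))"

definition factor_set ::
  "'g monoid \<Rightarrow> 'p monoid \<Rightarrow> ('p \<Rightarrow> 'a::ab_group_add \<Rightarrow> 'a) \<Rightarrow> ('p \<Rightarrow> 'p \<Rightarrow> 'p \<Rightarrow> 'a)
   \<Rightarrow> ('g \<Rightarrow> 'g \<Rightarrow> 'p \<Rightarrow> 'a) \<Rightarrow> ('g \<Rightarrow> ('p, 'a) mfun) \<Rightarrow> bool" where
  "factor_set \<Gamma> P act \<xi> \<theta> F \<longleftrightarrow>
     (\<forall>\<sigma>\<in>carrier \<Gamma>. monoidal_autoequiv P act \<xi> (F \<sigma>))
   \<and> (\<forall>\<sigma>\<in>carrier \<Gamma>. \<forall>\<tau>\<in>carrier \<Gamma>.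
        mnat P act (mf_comp P (F \<sigma>) (F \<tau>)) (F (\<sigma> \<otimes>\<^bsub>\<Gamma>\<^esub> \<tau>)) (\<theta> \<sigma> \<tau>))
   \<and> mf_eq_on P (F \<one>\<^bsub>\<Gamma>\<^esub>) mf_id
   \<and> (\<forall>\<sigma>\<in>carrier \<Gamma>. \<forall>x\<in>carrier P. \<theta> \<one>\<^bsub>\<Gamma>\<^esub> \<sigma> x = 0 \<and> \<theta> \<sigma> \<one>\<^bsub>\<Gamma>\<^esub> x = 0)
   \<and> (\<forall>\<sigma>\<in>carrier \<Gamma>. \<forall>\<tau>\<in>carrier \<Gamma>. \<forall>\<gamma>\<in>carrier \<Gamma>. \<forall>x\<in>carrier P.
        vcomp (\<theta> (\<sigma> \<otimes>\<^bsub>\<Gamma>\<^esub> \<tau>) \<gamma>) (whisk_r (\<theta> \<sigma> \<tau>) (F \<gamma>)) x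
        = vcomp (\<theta> \<sigma> (\<tau> \<otimes>\<^bsub>\<Gamma>\<^esub> \<gamma>)) (whisk_l (F \<sigma>) (mf_comp P (F \<tau>) (F \<gamma>)) (\<theta> \<tau> \<gamma>)) x)"

definition enough_strict :: "'g monoid \<Rightarrow> ('g \<Rightarrow> ('p, 'a::zero) mfun) \<Rightarrow> bool" where
  "enough_strict \<Gamma> F \<longleftrightarrow> (\<forall>\<sigma>\<in>carrier \<Gamma>. mf_hat (F \<sigma>) = 0)"

definition cohomologous ::
  "'g monoid \<Rightarrow> 'p monoid \<Rightarrow> ('p \<Rightarrow> 'a::ab_group_add \<Rightarrow> 'a)
   \<Rightarrow> ('g \<Rightarrow> 'g \<Rightarrow> 'p \<Rightarrow> 'a) \<Rightarrow> ('g \<Rightarrow> ('p, 'a) mfun)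
   \<Rightarrow> ('g \<Rightarrow> 'g \<Rightarrow> 'p \<Rightarrow> 'a) \<Rightarrow> ('g \<Rightarrow> ('p, 'a) mfun) \<Rightarrow> bool" where
  "cohomologous \<Gamma> P act \<theta> F \<mu> G \<longleftrightarrow>
     (\<exists>u :: 'g \<Rightarrow> 'p \<Rightarrow> 'a.
        (\<forall>\<sigma>\<in>carrier \<Gamma>. mnat P act (F \<sigma>) (G \<sigma>) (u \<sigma>))
      \<and> (\<forall>x\<in>carrier P. u \<one>\<^bsub>\<Gamma>\<^esub> x = 0)
      \<and> (\<forall>\<sigma>\<in>carrier \<Gamma>. \<forall>\<tau>\<in>carrier \<Gamma>. \<forall>x\<in>carrier P.
           vcomp (u (\<sigma> \<otimes>\<^bsub>\<Gamma>\<^esub> \<tau>)) (\<theta> \<sigma> \<tau>) x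
           = vcomp (\<mu> \<sigma> \<tau>) (vcomp (whisk_r (u \<sigma>) (G \<tau>)) (whisk_l (F \<sigma>) (F \<tau>) (u \<tau>))) x))"

end

theory Submission
  imports Defs "HOL.Modules"
begin

text \<open>
  The enough strict factor set is obtained by transport of structure.  For each \<sigma>, the constant
  family u\<sigma>(x) = F\<sigma>^ is an isomorphism of monoidal functors from F\<sigma> onto the functor G\<sigma> whose
  constraint G\<sigma>~ is F\<sigma>~ changed by the coboundary of u\<sigma>; this change makes G\<sigma>^ = 0.
  The cohomology condition forces \<mu>(\<sigma>,\<tau>) = u(\<sigma>\<tau>) \<circ> \<theta>(\<sigma>,\<tau>) \<circ> (u\<sigma> G\<tau> \<circ> F\<sigma> u\<tau>)\<inverse>, an isomorphism
  G\<sigma> G\<tau> \<rightarrow> G(\<sigma>\<tau>) since it is composed of monoidal isomorphisms; its coherence is that of \<theta>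
  because A is abelian.  Abelianness is also what makes composites of monoidal functors
  monoidal: the morphism part of a monoidal functor F is a single additive map \<phi> with
  \<phi>(x\<cdot>a) = F(x)\<cdot>\<phi>(a).
\<close>

lemma monoidal_functorD:
  assumes "monoidal_functor P act \<xi> F"
  shows mf_obj_closed: "x \<in> carrier P \<Longrightarrow> mf_obj F x \<in> carrier P"
    and mf_mor_additive: "x \<in> carrier P \<Longrightarrow> additive (mf_mor F x)"
    and mf_obj_mult: "x \<in> carrier P \<Longrightarrow> y \<in> carrier P \<Longrightarrow>
      mf_obj F (x \<otimes>\<^bsub>P\<^esub> y) = mf_obj F x \<otimes>\<^bsub>P\<^esub> mf_obj F y"
    and mf_obj_one: "mf_obj F \<one>\<^bsub>P\<^esub> = \<one>\<^bsub>P\<^esub>"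
    and mf_tld_natural: "x \<in> carrier P \<Longrightarrow> y \<in> carrier P \<Longrightarrow>
      mf_tld F x y + mf_mor F (x \<otimes>\<^bsub>P\<^esub> y) (u + act x v)
      = (mf_mor F x u + act (mf_obj F x) (mf_mor F y v)) + mf_tld F x y"
    and mf_tld_assoc: "x \<in> carrier P \<Longrightarrow> y \<in> carrier P \<Longrightarrow> z \<in> carrier P \<Longrightarrow>
      \<xi> (mf_obj F x) (mf_obj F y) (mf_obj F z)
        + act (mf_obj F x) (mf_tld F y z) + mf_tld F x (y \<otimes>\<^bsub>P\<^esub> z)
      = mf_tld F x y + mf_tld F (x \<otimes>\<^bsub>P\<^esub> y) z + mf_mor F (x \<otimes>\<^bsub>P\<^esub> y \<otimes>\<^bsub>P\<^esub> z) (\<xi> x y z)"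
    and mf_hat_left: "x \<in> carrier P \<Longrightarrow> mf_hat F + mf_tld F \<one>\<^bsub>P\<^esub> x = 0"
    and mf_hat_right: "x \<in> carrier P \<Longrightarrow> act (mf_obj F x) (mf_hat F) + mf_tld F x \<one>\<^bsub>P\<^esub> = 0"
  using assms unfolding monoidal_functor_def additive_def by auto

lemma mnatD:
  assumes "mnat P act F G t"
  shows mnat_obj: "x \<in> carrier P \<Longrightarrow> mf_obj G x = mf_obj F x"
    and mnat_mor: "x \<in> carrier P \<Longrightarrow> mf_mor G x u = mf_mor F x u"
    and mnat_tld: "x \<in> carrier P \<Longrightarrow> y \<in> carrier P \<Longrightarrow>
      mf_tld G x y = t x + act (mf_obj F x) (t y) + mf_tld F x y - t (x \<otimes>\<^bsub>P\<^esub> y)"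
    and mnat_hat: "mf_hat G = mf_hat F - t \<one>\<^bsub>P\<^esub>"
  using assms unfolding mnat_def by (auto simp: algebra_simps eq_diff_eq)

lemma monoidal_autoequiv_mnat:
  assumes "mnat P act F G t" "monoidal_autoequiv P act \<xi> F" "monoidal_functor P act \<xi> G"
  shows "monoidal_autoequiv P act \<xi> G"
proof -
  have "bij_betw (mf_obj G) (carrier P) (carrier P) = bij_betw (mf_obj F) (carrier P) (carrier P)"
    by (rule bij_betw_cong) (simp add: mnat_obj[OF assms(1)])
  moreover have "mf_mor G x = mf_mor F x" if "x \<in> carrier P" for x
    using mnat_mor[OF assms(1) that] by auto
  ultimately show ?thesis
    using assms(2,3) by (simp add: monoidal_autoequiv_def)
qed

definition mf_twist :: "'p monoid \<Rightarrow> ('p \<Rightarrow> 'a::ab_group_add \<Rightarrow> 'a) \<Rightarrow> ('p, 'a) mfun \<Rightarrow> ('p \<Rightarrow> 'a) \<Rightarrow> ('p, 'a) mfun" where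
  "mf_twist P act F t = F\<lparr>mf_tld := \<lambda>x y. t x + act (mf_obj F x) (t y) + mf_tld F x y - t (x \<otimes>\<^bsub>P\<^esub> y),
                          mf_hat := mf_hat F - t \<one>\<^bsub>P\<^esub>\<rparr>"

lemma mf_twist_simps [simp]:
  "mf_obj (mf_twist P act F t) = mf_obj F"
  "mf_mor (mf_twist P act F t) = mf_mor F"
  "mf_tld (mf_twist P act F t) x y = t x + act (mf_obj F x) (t y) + mf_tld F x y - t (x \<otimes>\<^bsub>P\<^esub> y)"
  "mf_hat (mf_twist P act F t) = mf_hat F - t \<one>\<^bsub>P\<^esub>"
  by (simp_all add: mf_twist_def)

lemma mnat_twist: "mnat P act F (mf_twist P act F t) t"
  by (simp add: mnat_def)

definition factor_set_transport ::
  "'g monoid \<Rightarrow> ('g \<Rightarrow> 'g \<Rightarrow> 'p \<Rightarrow> 'a::ab_group_add) \<Rightarrow> ('g \<Rightarrow> ('p, 'a) mfun) \<Rightarrow> ('g \<Rightarrow> ('p, 'a) mfun)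
    \<Rightarrow> ('g \<Rightarrow> 'p \<Rightarrow> 'a) \<Rightarrow> 'g \<Rightarrow> 'g \<Rightarrow> 'p \<Rightarrow> 'a" where
  "factor_set_transport \<Gamma> \<theta> F G u \<sigma> \<tau> = vcomp (u (\<sigma> \<otimes>\<^bsub>\<Gamma>\<^esub> \<tau>))
     (vcomp (\<theta> \<sigma> \<tau>) (\<lambda>x. - vcomp (whisk_r (u \<sigma>) (G \<tau>)) (whisk_l (F \<sigma>) (F \<tau>) (u \<tau>)) x))"

lemma cohomologous_factor_set_transport:
  assumes "\<And>\<sigma>. \<sigma> \<in> carrier \<Gamma> \<Longrightarrow> mnat P act (F \<sigma>) (G \<sigma>) (u \<sigma>)"
    and "\<And>x. x \<in> carrier P \<Longrightarrow> u \<one>\<^bsub>\<Gamma>\<^esub> x = 0"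
  shows "cohomologous \<Gamma> P act \<theta> F (factor_set_transport \<Gamma> \<theta> F G u) G"
  unfolding cohomologous_def
  using assms by (intro exI[of _ u]) (simp add: factor_set_transport_def vcomp_def)

context
  fixes P :: "'p monoid" and act :: "'p \<Rightarrow> 'a::ab_group_add \<Rightarrow> 'a"
  assumes module: "left_module P act"
begin

interpretation P: group P
  using module by (simp add: left_module_def)

lemma act_additive: "x \<in> carrier P \<Longrightarrow> additive (act x)"
  using module by (simp add: left_module_def additive_def)

lemma act_one [simp]: "act \<one>\<^bsub>P\<^esub> u = u"
  using module by (simp add: left_module_def)

lemma act_mult: "x \<in> carrier P \<Longrightarrow> y \<in> carrier P \<Longrightarrow> act (x \<otimes>\<^bsub>P\<^esub> y) u = act x (act y u)"
  using module by (simp add: left_module_def)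

lemmas act_simps = additive.add[OF act_additive] additive.diff[OF act_additive]
  additive.minus[OF act_additive] additive.zero[OF act_additive]

lemma monoidal_functor_mor_uniform:
  assumes F: "monoidal_functor P act \<xi> F"
  obtains \<phi> where "additive \<phi>" and "\<And>x. x \<in> carrier P \<Longrightarrow> mf_mor F x = \<phi>"
    and "\<And>x v. x \<in> carrier P \<Longrightarrow> \<phi> (act x v) = act (mf_obj F x) (\<phi> v)"
proof
  have natural: "mf_mor F (x \<otimes>\<^bsub>P\<^esub> y) (u + act x v) = mf_mor F x u + act (mf_obj F x) (mf_mor F y v)"
    if "x \<in> carrier P" "y \<in> carrier P" for x y u v
    using mf_tld_natural[OF F that, of u v] by (simp add: add.commute)
  show uniform: "mf_mor F x = mf_mor F \<one>\<^bsub>P\<^esub>" if x: "x \<in> carrier P" for x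
  proof
    fix u
    show "mf_mor F x u = mf_mor F \<one>\<^bsub>P\<^esub> u"
      using natural[OF P.one_closed x, of u 0] x
      by (simp add: mf_obj_one[OF F] additive.zero[OF mf_mor_additive[OF F x]])
  qed
  show "additive (mf_mor F \<one>\<^bsub>P\<^esub>)"
    by (rule mf_mor_additive[OF F P.one_closed])
  show "mf_mor F \<one>\<^bsub>P\<^esub> (act x v) = act (mf_obj F x) (mf_mor F \<one>\<^bsub>P\<^esub> v)" if x: "x \<in> carrier P" for x v
    using natural[OF x P.one_closed, of 0 v] x uniform[OF x]
    by (simp add: additive.zero[OF mf_mor_additive[OF F P.one_closed]])
qed

lemma monoidal_functor_comp:
  assumes F: "monoidal_functor P act \<xi> F" and G: "monoidal_functor P act \<xi> G"
  shows "monoidal_functor P act \<xi> (mf_comp P F G)"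
proof -
  obtain \<phi> where \<phi>: "additive \<phi>" "\<And>x. x \<in> carrier P \<Longrightarrow> mf_mor F x = \<phi>"
    "\<And>x v. x \<in> carrier P \<Longrightarrow> \<phi> (act x v) = act (mf_obj F x) (\<phi> v)"
    using monoidal_functor_mor_uniform[OF F] by blast
  obtain \<psi> where \<psi>: "additive \<psi>" "\<And>x. x \<in> carrier P \<Longrightarrow> mf_mor G x = \<psi>"
    "\<And>x v. x \<in> carrier P \<Longrightarrow> \<psi> (act x v) = act (mf_obj G x) (\<psi> v)"
    using monoidal_functor_mor_uniform[OF G] by blast
  note simps = \<phi>(2) \<psi>(2) additive.add[OF \<phi>(1)] additive.add[OF \<psi>(1)] additive.zero[OF \<phi>(1)]
    mf_obj_closed[OF F] mf_obj_closed[OF G] mf_obj_mult[OF F] mf_obj_mult[OF G]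
    mf_obj_one[OF F] mf_obj_one[OF G]
  have assoc: "\<xi> (mf_obj F (mf_obj G x)) (mf_obj F (mf_obj G y)) (mf_obj F (mf_obj G z))
      + act (mf_obj F (mf_obj G x)) (mf_tld (mf_comp P F G) y z) + mf_tld (mf_comp P F G) x (y \<otimes>\<^bsub>P\<^esub> z)
    = mf_tld (mf_comp P F G) x y + mf_tld (mf_comp P F G) (x \<otimes>\<^bsub>P\<^esub> y) z
      + \<phi> (\<psi> (\<xi> x y z))"
    if x: "x \<in> carrier P" and y: "y \<in> carrier P" and z: "z \<in> carrier P" for x y z
  proof -
    define a b c where "a = mf_obj G x" and "b = mf_obj G y" and "c = mf_obj G z"
    have abc: "a \<in> carrier P" "b \<in> carrier P" "c \<in> carrier P"
      using x y z by (simp_all add: a_def b_def c_def simps)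
    have F_assoc: "\<xi> (mf_obj F a) (mf_obj F b) (mf_obj F c) + act (mf_obj F a) (mf_tld F b c)
        + mf_tld F a (b \<otimes>\<^bsub>P\<^esub> c) = mf_tld F a b + mf_tld F (a \<otimes>\<^bsub>P\<^esub> b) c + \<phi> (\<xi> a b c)"
      using mf_tld_assoc[OF F abc] abc by (simp add: simps)
    have G_assoc: "\<phi> (\<xi> a b c + act a (mf_tld G y z) + mf_tld G x (y \<otimes>\<^bsub>P\<^esub> z))
        = \<phi> (mf_tld G x y + mf_tld G (x \<otimes>\<^bsub>P\<^esub> y) z + \<psi> (\<xi> x y z))"
      using mf_tld_assoc[OF G x y z] x y z by (simp add: a_def b_def c_def simps)
    have "(\<xi> (mf_obj F a) (mf_obj F b) (mf_obj F c)
        + act (mf_obj F a) (mf_tld (mf_comp P F G) y z) + mf_tld (mf_comp P F G) x (y \<otimes>\<^bsub>P\<^esub> z))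
      - (mf_tld (mf_comp P F G) x y + mf_tld (mf_comp P F G) (x \<otimes>\<^bsub>P\<^esub> y) z + \<phi> (\<psi> (\<xi> x y z)))
      = (\<xi> (mf_obj F a) (mf_obj F b) (mf_obj F c) + act (mf_obj F a) (mf_tld F b c)
          + mf_tld F a (b \<otimes>\<^bsub>P\<^esub> c) - (mf_tld F a b + mf_tld F (a \<otimes>\<^bsub>P\<^esub> b) c + \<phi> (\<xi> a b c)))
        + (\<phi> (\<xi> a b c + act a (mf_tld G y z) + mf_tld G x (y \<otimes>\<^bsub>P\<^esub> z))
          - \<phi> (mf_tld G x y + mf_tld G (x \<otimes>\<^bsub>P\<^esub> y) z + \<psi> (\<xi> x y z)))"
      using x y z abc
      by (simp add: mf_comp_def a_def b_def c_def simps \<phi>(3) act_simps algebra_simps)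
    then show ?thesis
      unfolding F_assoc G_assoc by (simp add: a_def b_def c_def)
  qed
  have left_unit: "mf_hat (mf_comp P F G) + mf_tld (mf_comp P F G) \<one>\<^bsub>P\<^esub> x = 0"
    if x: "x \<in> carrier P" for x
  proof -
    have "mf_hat (mf_comp P F G) + mf_tld (mf_comp P F G) \<one>\<^bsub>P\<^esub> x
      = (mf_hat F + mf_tld F \<one>\<^bsub>P\<^esub> (mf_obj G x)) + \<phi> (mf_hat G + mf_tld G \<one>\<^bsub>P\<^esub> x)"
      using x by (simp add: mf_comp_def simps algebra_simps)
    then show ?thesis
      using x by (simp add: mf_hat_left[OF F] mf_hat_left[OF G] simps)
  qed
  have right_unit: "act (mf_obj (mf_comp P F G) x) (mf_hat (mf_comp P F G))
      + mf_tld (mf_comp P F G) x \<one>\<^bsub>P\<^esub> = 0"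
    if x: "x \<in> carrier P" for x
  proof -
    have "act (mf_obj (mf_comp P F G) x) (mf_hat (mf_comp P F G)) + mf_tld (mf_comp P F G) x \<one>\<^bsub>P\<^esub>
      = (act (mf_obj F (mf_obj G x)) (mf_hat F) + mf_tld F (mf_obj G x) \<one>\<^bsub>P\<^esub>)
        + \<phi> (act (mf_obj G x) (mf_hat G) + mf_tld G x \<one>\<^bsub>P\<^esub>)"
      using x by (simp add: mf_comp_def simps \<phi>(3) act_simps algebra_simps)
    then show ?thesis
      using x by (simp add: mf_hat_right[OF F] mf_hat_right[OF G] simps)
  qed
  show ?thesis
    using assoc left_unit right_unit unfolding monoidal_functor_def
    by (simp add: mf_comp_def simps \<phi>(3) \<psi>(3) act_simps algebra_simps)
qed

lemma monoidal_functor_twist: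
  assumes F: "monoidal_functor P act \<xi> F"
  shows "monoidal_functor P act \<xi> (mf_twist P act F t)"
proof -
  let ?G = "mf_twist P act F t"
  note F_simps = mf_obj_closed[OF F] mf_obj_mult[OF F] mf_obj_one[OF F]
  have assoc: "\<xi> (mf_obj ?G x) (mf_obj ?G y) (mf_obj ?G z)
        + act (mf_obj ?G x) (mf_tld ?G y z) + mf_tld ?G x (y \<otimes>\<^bsub>P\<^esub> z)
      = mf_tld ?G x y + mf_tld ?G (x \<otimes>\<^bsub>P\<^esub> y) z + mf_mor ?G (x \<otimes>\<^bsub>P\<^esub> y \<otimes>\<^bsub>P\<^esub> z) (\<xi> x y z)"
    if "x \<in> carrier P" "y \<in> carrier P" "z \<in> carrier P" for x y z
    using that mf_tld_assoc[OF F that]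
    by (simp add: act_simps act_mult F_simps P.m_assoc algebra_simps)
  show ?thesis
    using F assoc unfolding monoidal_functor_def
    by (auto simp: act_simps F_simps algebra_simps)
qed

lemma mnat_vcomp:
  assumes t: "mnat P act F G t" and s: "mnat P act G H s" and F: "monoidal_functor P act \<xi> F"
  shows "mnat P act F H (vcomp s t)"
  unfolding mnat_def vcomp_def
  by (simp add: mnatD[OF t] mnatD[OF s] mf_obj_closed[OF F] act_simps algebra_simps)

lemma mnat_inverse:
  assumes t: "mnat P act F G t" and F: "monoidal_functor P act \<xi> F"
  shows "mnat P act G F (\<lambda>x. - t x)"
  unfolding mnat_def
  by (simp add: mnatD[OF t] mf_obj_closed[OF F] act_simps algebra_simps)

lemma mnat_whisk_r:
  assumes t: "mnat P act F G t" and K: "monoidal_functor P act \<xi> K"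
  shows "mnat P act (mf_comp P F K) (mf_comp P G K) (whisk_r t K)"
  unfolding mnat_def mf_comp_def whisk_r_def
  by (simp add: mnatD[OF t] mf_obj_closed[OF K] mf_obj_mult[OF K] mf_obj_one[OF K] algebra_simps)

lemma mnat_whisk_l:
  assumes t: "mnat P act G H t" and F: "monoidal_functor P act \<xi> F"
    and G: "monoidal_functor P act \<xi> G"
  shows "mnat P act (mf_comp P F G) (mf_comp P F H) (whisk_l F G t)"
proof -
  obtain \<phi> where \<phi>: "additive \<phi>" "\<And>x. x \<in> carrier P \<Longrightarrow> mf_mor F x = \<phi>"
    "\<And>x v. x \<in> carrier P \<Longrightarrow> \<phi> (act x v) = act (mf_obj F x) (\<phi> v)"
    using monoidal_functor_mor_uniform[OF F] by blast
  show ?thesis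
    unfolding mnat_def mf_comp_def whisk_l_def
    by (simp add: mnatD[OF t] \<phi>(2,3) additive.add[OF \<phi>(1)] additive.diff[OF \<phi>(1)]
        mf_obj_closed[OF G] mf_obj_mult[OF G] mf_obj_one[OF G] algebra_simps)
qed

lemma mf_eq_on_mnat_zero:
  assumes t: "mnat P act F G t" and F: "monoidal_functor P act \<xi> F"
    and zero: "\<And>x. x \<in> carrier P \<Longrightarrow> t x = 0"
  shows "mf_eq_on P F G"
  unfolding mf_eq_on_def
  by (simp add: mnatD[OF t] zero mf_obj_closed[OF F] act_simps)

lemma factor_set_factor_set_transport:
  assumes \<Gamma>: "monoid \<Gamma>" and fs: "factor_set \<Gamma> P act \<xi> \<theta> F"
    and G: "\<And>\<sigma>. \<sigma> \<in> carrier \<Gamma> \<Longrightarrow> monoidal_functor P act \<xi> (G \<sigma>)"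
    and u: "\<And>\<sigma>. \<sigma> \<in> carrier \<Gamma> \<Longrightarrow> mnat P act (F \<sigma>) (G \<sigma>) (u \<sigma>)"
    and u_one: "\<And>x. x \<in> carrier P \<Longrightarrow> u \<one>\<^bsub>\<Gamma>\<^esub> x = 0"
  shows "factor_set \<Gamma> P act \<xi> (factor_set_transport \<Gamma> \<theta> F G u) G"
proof -
  let ?\<mu> = "factor_set_transport \<Gamma> \<theta> F G u"
  note fs_def = fs[unfolded factor_set_def]
  have Fe: "monoidal_autoequiv P act \<xi> (F \<sigma>)" if "\<sigma> \<in> carrier \<Gamma>" for \<sigma>
    using fs_def that by blast
  then have F: "monoidal_functor P act \<xi> (F \<sigma>)" if "\<sigma> \<in> carrier \<Gamma>" for \<sigma>
    using that by (simp add: monoidal_autoequiv_def)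
  have \<theta>: "mnat P act (mf_comp P (F \<sigma>) (F \<tau>)) (F (\<sigma> \<otimes>\<^bsub>\<Gamma>\<^esub> \<tau>)) (\<theta> \<sigma> \<tau>)"
    if "\<sigma> \<in> carrier \<Gamma>" "\<tau> \<in> carrier \<Gamma>" for \<sigma> \<tau>
    using fs_def that by blast
  have F_one: "mf_eq_on P (F \<one>\<^bsub>\<Gamma>\<^esub>) mf_id"
    using fs_def by blast
  have \<mu>: "mnat P act (mf_comp P (G \<sigma>) (G \<tau>)) (G (\<sigma> \<otimes>\<^bsub>\<Gamma>\<^esub> \<tau>)) (?\<mu> \<sigma> \<tau>)"
    if \<sigma>: "\<sigma> \<in> carrier \<Gamma>" and \<tau>: "\<tau> \<in> carrier \<Gamma>" for \<sigma> \<tau>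
  proof -
    have FF: "monoidal_functor P act \<xi> (mf_comp P (F \<sigma>) (F \<tau>))"
      by (rule monoidal_functor_comp[OF F[OF \<sigma>] F[OF \<tau>]])
    have GG: "monoidal_functor P act \<xi> (mf_comp P (G \<sigma>) (G \<tau>))"
      by (rule monoidal_functor_comp[OF G[OF \<sigma>] G[OF \<tau>]])
    have "mnat P act (mf_comp P (F \<sigma>) (F \<tau>)) (mf_comp P (G \<sigma>) (G \<tau>))
        (vcomp (whisk_r (u \<sigma>) (G \<tau>)) (whisk_l (F \<sigma>) (F \<tau>) (u \<tau>)))"
      by (rule mnat_vcomp[OF mnat_whisk_l[OF u[OF \<tau>] F[OF \<sigma>] F[OF \<tau>]] mnat_whisk_r[OF u[OF \<sigma>] G[OF \<tau>]] FF])
    then have "mnat P act (mf_comp P (G \<sigma>) (G \<tau>)) (mf_comp P (F \<sigma>) (F \<tau>))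
        (\<lambda>x. - vcomp (whisk_r (u \<sigma>) (G \<tau>)) (whisk_l (F \<sigma>) (F \<tau>) (u \<tau>)) x)"
      using FF by (rule mnat_inverse)
    then show ?thesis
      unfolding factor_set_transport_def
      by (rule mnat_vcomp[OF mnat_vcomp[OF _ \<theta>[OF \<sigma> \<tau>] GG] u[OF monoid.m_closed[OF \<Gamma> \<sigma> \<tau>]] GG])
  qed
  have G_one: "mf_eq_on P (G \<one>\<^bsub>\<Gamma>\<^esub>) mf_id"
    using F_one mf_eq_on_mnat_zero[OF u F u_one] \<Gamma>
    unfolding mf_eq_on_def by (simp add: monoid.one_closed)
  have normal: "?\<mu> \<one>\<^bsub>\<Gamma>\<^esub> \<sigma> x = 0 \<and> ?\<mu> \<sigma> \<one>\<^bsub>\<Gamma>\<^esub> x = 0"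
    if \<sigma>: "\<sigma> \<in> carrier \<Gamma>" and x: "x \<in> carrier P" for \<sigma> x
    using fs_def F_one G_one \<sigma> x \<Gamma> unfolding mf_eq_on_def
    by (simp add: factor_set_transport_def vcomp_def whisk_r_def whisk_l_def mf_id_def u_one
      mf_obj_closed[OF G] mf_obj_closed[OF F] additive.zero[OF mf_mor_additive[OF F]])
  have cocycle: "vcomp (?\<mu> (\<sigma> \<otimes>\<^bsub>\<Gamma>\<^esub> \<tau>) \<gamma>) (whisk_r (?\<mu> \<sigma> \<tau>) (G \<gamma>)) x
      = vcomp (?\<mu> \<sigma> (\<tau> \<otimes>\<^bsub>\<Gamma>\<^esub> \<gamma>)) (whisk_l (G \<sigma>) (mf_comp P (G \<tau>) (G \<gamma>)) (?\<mu> \<tau> \<gamma>)) x"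
    if \<sigma>: "\<sigma> \<in> carrier \<Gamma>" and \<tau>: "\<tau> \<in> carrier \<Gamma>" and \<gamma>: "\<gamma> \<in> carrier \<Gamma>"
      and x: "x \<in> carrier P" for \<sigma> \<tau> \<gamma> x
  proof -
    define a b where "a = mf_obj (F \<gamma>) x" and "b = mf_obj (F \<tau>) a"
    have ab: "a \<in> carrier P" "b \<in> carrier P"
      using x by (simp_all add: a_def b_def mf_obj_closed[OF F] \<tau> \<gamma>)
    have \<theta>_cocycle: "\<theta> (\<sigma> \<otimes>\<^bsub>\<Gamma>\<^esub> \<tau>) \<gamma> x + \<theta> \<sigma> \<tau> a
        = \<theta> \<sigma> (\<tau> \<otimes>\<^bsub>\<Gamma>\<^esub> \<gamma>) x + mf_mor (F \<sigma>) b (\<theta> \<tau> \<gamma> x)"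
      using fs_def \<sigma> \<tau> \<gamma> x
      by (simp add: vcomp_def whisk_r_def whisk_l_def mf_comp_def a_def b_def)
    have mor_comp: "mf_mor (F (\<sigma> \<otimes>\<^bsub>\<Gamma>\<^esub> \<tau>)) a w = mf_mor (F \<sigma>) b (mf_mor (F \<tau>) a w)" for w
      using mnat_mor[OF \<theta>[OF \<sigma> \<tau>] ab(1)] by (simp add: mf_comp_def b_def)
    have obj_comp: "mf_obj (F (\<tau> \<otimes>\<^bsub>\<Gamma>\<^esub> \<gamma>)) x = b"
      using mnat_obj[OF \<theta>[OF \<tau> \<gamma>] x] by (simp add: mf_comp_def a_def b_def)
    have "vcomp (?\<mu> (\<sigma> \<otimes>\<^bsub>\<Gamma>\<^esub> \<tau>) \<gamma>) (whisk_r (?\<mu> \<sigma> \<tau>) (G \<gamma>)) x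
        - vcomp (?\<mu> \<sigma> (\<tau> \<otimes>\<^bsub>\<Gamma>\<^esub> \<gamma>)) (whisk_l (G \<sigma>) (mf_comp P (G \<tau>) (G \<gamma>)) (?\<mu> \<tau> \<gamma>)) x
      = (\<theta> (\<sigma> \<otimes>\<^bsub>\<Gamma>\<^esub> \<tau>) \<gamma> x + \<theta> \<sigma> \<tau> a)
        - (\<theta> \<sigma> (\<tau> \<otimes>\<^bsub>\<Gamma>\<^esub> \<gamma>) x + mf_mor (F \<sigma>) b (\<theta> \<tau> \<gamma> x))"
      using x ab \<sigma> \<tau> \<gamma>
      by (simp add: factor_set_transport_def vcomp_def whisk_r_def whisk_l_def mf_comp_def
          mnat_obj[OF u] mnat_mor[OF u] mf_obj_closed[OF F] mor_comp obj_comp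
          additive.add[OF mf_mor_additive[OF F]] additive.diff[OF mf_mor_additive[OF F]]
          additive.minus[OF mf_mor_additive[OF F]] monoid.m_assoc[OF \<Gamma>] monoid.m_closed[OF \<Gamma>]
          a_def[symmetric] b_def[symmetric] algebra_simps)
    then show ?thesis
      unfolding \<theta>_cocycle by simp
  qed
  show ?thesis
    unfolding factor_set_def
    using monoidal_autoequiv_mnat[OF u Fe G] \<mu> G_one normal cocycle by blast
qed

end

theorem lemma3p3:
  fixes \<Gamma> :: "'g monoid" and P :: "'p monoid"
    and act :: "'p \<Rightarrow> 'a::ab_group_add \<Rightarrow> 'a"
    and \<xi> :: "'p \<Rightarrow> 'p \<Rightarrow> 'p \<Rightarrow> 'a"
    and \<theta> :: "'g \<Rightarrow> 'g \<Rightarrow> 'p \<Rightarrow> 'a" and F :: "'g \<Rightarrow> ('p, 'a) mfun"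
  assumes "group \<Gamma>"
    and "left_module P act"
    and "normalized_3cocycle P act \<xi>"
    and "factor_set \<Gamma> P act \<xi> \<theta> F"
  shows "\<exists>\<mu> G. factor_set \<Gamma> P act \<xi> \<mu> G \<and> enough_strict \<Gamma> G
               \<and> cohomologous \<Gamma> P act \<theta> F \<mu> G"
proof -
  define u where "u \<sigma> = (\<lambda>_::'p. mf_hat (F \<sigma>))" for \<sigma>
  define G where "G \<sigma> = mf_twist P act (F \<sigma>) (u \<sigma>)" for \<sigma>
  have F: "monoidal_functor P act \<xi> (F \<sigma>)" if "\<sigma> \<in> carrier \<Gamma>" for \<sigma>
    using assms(4) that by (simp add: factor_set_def monoidal_autoequiv_def)
  have G: "monoidal_functor P act \<xi> (G \<sigma>)" if "\<sigma> \<in> carrier \<Gamma>" for \<sigma>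
    unfolding G_def by (rule monoidal_functor_twist[OF assms(2) F[OF that]])
  have u: "mnat P act (F \<sigma>) (G \<sigma>) (u \<sigma>)" for \<sigma>
    unfolding G_def by (rule mnat_twist)
  have u_one: "u \<one>\<^bsub>\<Gamma>\<^esub> x = 0" for x
    using assms(4) by (simp add: u_def factor_set_def mf_eq_on_def mf_id_def)
  have "enough_strict \<Gamma> G"
    by (simp add: enough_strict_def G_def u_def)
  moreover have "factor_set \<Gamma> P act \<xi> (factor_set_transport \<Gamma> \<theta> F G u) G"
    by (rule factor_set_factor_set_transport[OF assms(2) group.is_monoid[OF assms(1)] assms(4)])
      (simp_all add: G u u_one)
  moreover have "cohomologous \<Gamma> P act \<theta> F (factor_set_transport \<Gamma> \<theta> F G u) G"
    by (rule cohomologous_factor_set_transport) (simp_all add: u u_one)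
  ultimately show ?thesis
    by blast
qed

end
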